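(* Let $S$ be a finite set, $N\ge1$, $\mathcal X=S^N$, $\mu$ uniform on $\mathcal X$, and let $P$ be a coordinate-replacement kernel $Pf(x)=\frac1N\sum_{i=1}^N\sum_{u\in S}K_i(x_{-i};x_i,u)f(x^{i,u})$, reversible with respect to $\mu$, with a $P$-invariant set $\Omega\subseteq\mathcal X$, $\mu(\Omega)>0$. Let $G\subseteq\Omega$. Suppose there is $\gamma>0$ such that for every coordinate $i$ and every $x_{-i}$ whose $i$-fibre $\{x^{i,u}:u\in S\}$ intersects $G$, the fibre kernel $K_i(x_{-i})$ has spectral gap at least $\gamma$ with respect to the uniform measure on $S$. Then every nonnegative $F:\mathcal X\to\mathbb R$ with $\operatorname{supp}(F)\subseteq G$ satisfies \[ \operatorname{Ent}_\mu(F^2)\le C\frac{N\log|S|}{\gamma}\,\mathcal E_P^\mu(F,F), \] where $C<\infty$ is universal.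
   Context: For $x\in S^N$, $x^{i,u}$ is $x$ with coordinate $i$ replaced by $u$, and $x_{-i}=(x_1,\dots,x_{i-1},x_{i+1},\dots,x_N)$. In a coordinate-replacement kernel each $K_i(x_{-i})$ is a Markov kernel on $S$ reversible w.r.t. the uniform measure on $S$. $\Omega$ invariant means $P(x,y)=0$ for $x\in\Omega,y\notin\Omega$. $\operatorname{Ent}_\rho(f^2)=\rho(f^2\log f^2)-\rho(f^2)\log\rho(f^2)$; $\mathcal E^\rho_K(f,f)=\frac12\sum_{x,y}\rho(x)K(x,y)(f(x)-f(y))^2$. The spectral gap of a reversible kernel $K$ with stationary law $\rho$ is $1/C_P$, where $C_P$ is the smallest constant with $\operatorname{Var}_\rho(f)\le C_P\,\mathcal E^\rho_K(f,f)$ for all real $f$. *)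

theory Defs
  imports "HOL-Analysis.Analysis"
begin

definition config_space :: "nat set \<Rightarrow> nat \<Rightarrow> (nat \<Rightarrow> nat) set" where
  "config_space S N = PiE {..<N} (\<lambda>_. S)"

definition unif_exp :: "'b set \<Rightarrow> ('b \<Rightarrow> real) \<Rightarrow> real" where
  "unif_exp A g = (\<Sum>x\<in>A. g x) / real (card A)"

definition unif_prob :: "'b set \<Rightarrow> 'b set \<Rightarrow> real" where
  "unif_prob A B = real (card (A \<inter> B)) / real (card A)"

text \<open>Ent_rho(f^2) with rho uniform on A (0 log 0 = 0 since ln 0 = 0).\<close>
definition ent_sq :: "'b set \<Rightarrow> ('b \<Rightarrow> real) \<Rightarrow> real" where
  "ent_sq A f = unif_exp A (\<lambda>x. (f x)\<^sup>2 * ln ((f x)\<^sup>2))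
               - unif_exp A (\<lambda>x. (f x)\<^sup>2) * ln (unif_exp A (\<lambda>x. (f x)\<^sup>2))"

definition unif_var :: "'b set \<Rightarrow> ('b \<Rightarrow> real) \<Rightarrow> real" where
  "unif_var A f = unif_exp A (\<lambda>x. (f x)\<^sup>2) - (unif_exp A f)\<^sup>2"

definition dirichlet :: "'b set \<Rightarrow> ('b \<Rightarrow> 'b \<Rightarrow> real) \<Rightarrow> ('b \<Rightarrow> real) \<Rightarrow> real" where
  "dirichlet A K f = (1/2) * (\<Sum>x\<in>A. \<Sum>y\<in>A. (1 / real (card A)) * K x y * (f x - f y)\<^sup>2)"

definition unif_reversible_markov :: "'b set \<Rightarrow> ('b \<Rightarrow> 'b \<Rightarrow> real) \<Rightarrow> bool" where
  "unif_reversible_markov A K \<longleftrightarrow>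
     (\<forall>x\<in>A. \<forall>y\<in>A. K x y \<ge> 0) \<and> (\<forall>x\<in>A. (\<Sum>y\<in>A. K x y) = 1) \<and>
     (\<forall>x\<in>A. \<forall>y\<in>A. (1 / real (card A)) * K x y = (1 / real (card A)) * K y x)"

text \<open>Spectral gap 1/C_P, where C_P is the smallest constant with Var <= C_P * E
  (convention: C_P = 0 gives gap = \<infinity>, no admissible constant gives gap = 0).\<close>
definition spectral_gap :: "'b set \<Rightarrow> ('b \<Rightarrow> 'b \<Rightarrow> real) \<Rightarrow> ereal" where
  "spectral_gap A K = Sup {ereal g | g. g \<ge> 0 \<and>
      (\<forall>f :: 'b \<Rightarrow> real. g * unif_var A f \<le> dirichlet A K f)}"

definition coord_kernel ::
  "nat set \<Rightarrow> nat \<Rightarrow> (nat \<Rightarrow> (nat \<Rightarrow> nat) \<Rightarrow> nat \<Rightarrow> nat \<Rightarrow> real)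
     \<Rightarrow> (nat \<Rightarrow> nat) \<Rightarrow> (nat \<Rightarrow> nat) \<Rightarrow> real" where
  "coord_kernel S N K x y =
     (1 / real N) * (\<Sum>i<N. \<Sum>u\<in>S. (if y = x(i := u) then K i x (x i) u else 0))"

end

theory Submission
  imports Defs
begin

text \<open>
  Entropy tensorizes over the product of uniform measures:
  \<open>Ent\<^sub>\<mu>(F\<^sup>2)\<close> is at most the sum over the coordinates \<open>i\<close> of the
  \<open>\<mu>\<close>-average of the entropy of \<open>F\<^sup>2\<close> along the fibre through \<open>x\<close> in direction \<open>i\<close>.
  On a fibre that meets \<open>G\<close>, a crude log-Sobolev inequality for the uniform measure
  on \<open>S\<close> (constant \<open>10 log |S|\<close>, valid because a nonnegative function is at most
  \<open>|S|\<close> times its mean) and the spectral gap bound the fibre entropy by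
  \<open>10 log |S| / \<gamma>\<close> times the fibre Dirichlet form; on any other fibre \<open>F\<close>
  vanishes. Averaged over \<open>x\<close> and summed over \<open>i\<close>, the fibre Dirichlet forms
  give exactly \<open>N \<cdot> E\<^sub>P(F, F)\<close>, so \<open>C = 10\<close> works.
\<close>

lemma config_space_Suc:
  "config_space S (Suc N) = (\<lambda>(u, x). x(N := u)) ` (S \<times> config_space S N)"
  unfolding config_space_def lessThan_Suc by (simp add: PiE_insert_eq)

lemma inj_on_config_space_Suc: "inj_on (\<lambda>(u, x). x(N := u)) (S \<times> config_space S N)"
  unfolding config_space_def using inj_combinator[of N "{..<N}" "\<lambda>_. S"] by simp

lemma finite_config_space: "finite S \<Longrightarrow> finite (config_space S N)"
  unfolding config_space_def by (simp add: finite_PiE)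

lemma card_config_space: "finite S \<Longrightarrow> card (config_space S N) = card S ^ N"
  unfolding config_space_def by (simp add: card_PiE)

lemma config_space_memD: "x \<in> config_space S N \<Longrightarrow> i < N \<Longrightarrow> x i \<in> S"
  unfolding config_space_def by (auto simp: PiE_iff)

lemma fun_upd_in_config_space:
  "x \<in> config_space S N \<Longrightarrow> i < N \<Longrightarrow> u \<in> S \<Longrightarrow> x(i := u) \<in> config_space S N"
  unfolding config_space_def by (auto simp: PiE_iff extensional_def)

lemma fun_upd_in_config_space_Suc:
  "x \<in> config_space S N \<Longrightarrow> u \<in> S \<Longrightarrow> x(N := u) \<in> config_space S (Suc N)"
  unfolding config_space_Suc by auto

lemma sum_config_space_Suc:
  "(\<Sum>x\<in>config_space S (Suc N). h x) = (\<Sum>x\<in>config_space S N. \<Sum>u\<in>S. h (x(N := u)))"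
proof -
  have "(\<Sum>x\<in>config_space S (Suc N). h x)
      = (\<Sum>p\<in>S \<times> config_space S N. h ((\<lambda>(u, x). x(N := u)) p))"
    unfolding config_space_Suc by (rule sum.reindex[OF inj_on_config_space_Suc, unfolded comp_def])
  also have "\<dots> = (\<Sum>u\<in>S. \<Sum>x\<in>config_space S N. h (x(N := u)))"
    unfolding sum.cartesian_product by (intro sum.cong) auto
  finally show ?thesis by (simp add: sum.swap[of _ S])
qed

lemma sum_config_space_fibre:
  assumes "i < N"
  shows "(\<Sum>x\<in>config_space S N. \<Sum>u\<in>S. h (x(i := u))) = real (card S) * (\<Sum>x\<in>config_space S N. h x)"
proof -
  let ?X = "config_space S N"
  define \<phi> where "\<phi> p = ((fst p)(i := snd p), fst p i)" for p :: "(nat \<Rightarrow> nat) \<times> nat"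
  have "bij_betw \<phi> (?X \<times> S) (?X \<times> S)"
    by (rule bij_betw_byWitness[where f' = \<phi>])
      (auto simp: \<phi>_def fun_upd_in_config_space config_space_memD assms)
  then have "(\<Sum>p\<in>?X \<times> S. h (fst (\<phi> p))) = (\<Sum>p\<in>?X \<times> S. h (fst p))"
    by (rule sum.reindex_bij_betw)
  then show ?thesis
    by (simp add: \<phi>_def sum.cartesian_product' sum_distrib_left mult.commute)
qed

lemma unif_exp_const: "finite A \<Longrightarrow> A \<noteq> {} \<Longrightarrow> unif_exp A (\<lambda>_. c) = c"
  unfolding unif_exp_def by simp

lemma unif_exp_zero [simp]: "unif_exp A (\<lambda>_. 0) = 0"
  unfolding unif_exp_def by simp

lemma unif_exp_add: "unif_exp A (\<lambda>x. f x + g x) = unif_exp A f + unif_exp A g"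
  unfolding unif_exp_def by (simp add: sum.distrib add_divide_distrib)

lemma unif_exp_diff: "unif_exp A (\<lambda>x. f x - g x) = unif_exp A f - unif_exp A g"
  unfolding unif_exp_def by (simp add: sum_subtractf diff_divide_distrib)

lemma unif_exp_cmult: "unif_exp A (\<lambda>x. c * f x) = c * unif_exp A f"
  unfolding unif_exp_def by (simp add: sum_distrib_left[symmetric])

lemma unif_exp_multc: "unif_exp A (\<lambda>x. f x * c) = unif_exp A f * c"
  unfolding unif_exp_def by (simp add: sum_distrib_right[symmetric])

lemma unif_exp_sum: "finite I \<Longrightarrow> unif_exp A (\<lambda>x. \<Sum>i\<in>I. f i x) = (\<Sum>i\<in>I. unif_exp A (f i))"
  unfolding unif_exp_def by (simp add: sum.swap[of _ I] sum_divide_distrib)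

lemma unif_exp_swap:
  "unif_exp A (\<lambda>a. unif_exp B (\<lambda>b. h a b)) = unif_exp B (\<lambda>b. unif_exp A (\<lambda>a. h a b))"
  unfolding unif_exp_def by (simp add: sum_divide_distrib[symmetric] sum.swap[of _ A])

lemma unif_exp_mono: "(\<And>x. x \<in> A \<Longrightarrow> f x \<le> g x) \<Longrightarrow> unif_exp A f \<le> unif_exp A g"
  unfolding unif_exp_def by (intro divide_right_mono sum_mono) auto

lemma unif_exp_cong: "(\<And>x. x \<in> A \<Longrightarrow> f x = g x) \<Longrightarrow> unif_exp A f = unif_exp A g"
  unfolding unif_exp_def by (metis sum.cong)

lemma unif_exp_nonneg: "(\<And>x. x \<in> A \<Longrightarrow> 0 \<le> f x) \<Longrightarrow> 0 \<le> unif_exp A f"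
  unfolding unif_exp_def by (intro divide_nonneg_nonneg sum_nonneg) auto

lemma unif_exp_eq_0_imp_eq_0:
  assumes "finite A" "\<And>x. x \<in> A \<Longrightarrow> 0 \<le> f x" "unif_exp A f = 0" "x \<in> A"
  shows "f x = 0"
proof -
  have "card A > 0" using assms by (auto simp: card_gt_0_iff)
  then have "(\<Sum>x\<in>A. f x) = 0" using assms(3) unfolding unif_exp_def by simp
  then show ?thesis using sum_nonneg_eq_0_iff[OF assms(1)] assms by blast
qed

lemma unif_exp_config_space_Suc:
  assumes "finite S"
  shows "unif_exp (config_space S (Suc N)) h
       = unif_exp (config_space S N) (\<lambda>x. unif_exp S (\<lambda>u. h (x(N := u))))"
  unfolding unif_exp_def sum_config_space_Suc card_config_space[OF assms]
  by (simp add: sum_divide_distrib[symmetric] field_simps)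

definition unif_ent :: "'b set \<Rightarrow> ('b \<Rightarrow> real) \<Rightarrow> real" where
  "unif_ent A \<psi> = unif_exp A (\<lambda>x. \<psi> x * ln (\<psi> x)) - unif_exp A \<psi> * ln (unif_exp A \<psi>)"

lemma ent_sq_eq_unif_ent: "ent_sq A f = unif_ent A (\<lambda>x. (f x)\<^sup>2)"
  unfolding ent_sq_def unif_ent_def ..

lemma unif_ent_eq_0: "(\<And>x. x \<in> A \<Longrightarrow> \<psi> x = 0) \<Longrightarrow> unif_ent A \<psi> = 0"
proof -
  assume "\<And>x. x \<in> A \<Longrightarrow> \<psi> x = 0"
  then have "unif_exp A \<psi> = 0" "unif_exp A (\<lambda>x. \<psi> x * ln (\<psi> x)) = 0"
    by (simp_all add: unif_exp_def)
  then show ?thesis unfolding unif_ent_def by simp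
qed

lemma mult_ln_le:
  fixes p y :: real
  assumes "p > 0" "y > 0"
  shows "p * ln y \<le> p * ln p - p + y"
proof -
  have "ln (y / p) \<le> y / p - 1" using assms by (intro ln_le_minus_one) simp
  then have "p * ln (y / p) \<le> p * (y / p - 1)" using assms by (intro mult_left_mono) auto
  then show ?thesis using assms by (simp add: ln_div algebra_simps)
qed

lemma unif_ent_variational:
  assumes fin: "finite A"
    and \<psi>: "\<And>a. a \<in> A \<Longrightarrow> \<psi> a \<ge> 0" and \<phi>: "\<And>a. a \<in> A \<Longrightarrow> \<phi> a \<ge> 0"
    and mean_\<phi>: "unif_exp A \<phi> > 0"
    and zero: "\<And>a. a \<in> A \<Longrightarrow> \<phi> a = 0 \<Longrightarrow> \<psi> a = 0"
  shows "unif_exp A (\<lambda>a. \<psi> a * (ln (\<phi> a) - ln (unif_exp A \<phi>))) \<le> unif_ent A \<psi>"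
proof -
  define m where "m = unif_exp A \<psi>"
  define M where "M = unif_exp A \<phi>"
  have "m \<ge> 0" unfolding m_def by (rule unif_exp_nonneg) (rule \<psi>)
  show ?thesis
  proof (cases "m = 0")
    case True
    then have "\<psi> a = 0" if "a \<in> A" for a
      using unif_exp_eq_0_imp_eq_0[OF fin \<psi>] m_def that by auto
    then show ?thesis by (simp add: unif_exp_def unif_ent_eq_0)
  next
    case False
    with \<open>m \<ge> 0\<close> have "m > 0" by simp
    have "M > 0" using mean_\<phi> M_def by simp
    have pointwise: "\<psi> a * (ln (\<phi> a) - ln M) + \<psi> a * ln m \<le> \<psi> a * ln (\<psi> a) - \<psi> a + \<phi> a * m / M"
      if a: "a \<in> A" for a
    proof (cases "\<phi> a = 0 \<or> \<psi> a = 0")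
      case True
      then show ?thesis using zero[OF a] \<phi>[OF a] \<open>m > 0\<close> \<open>M > 0\<close> by auto
    next
      case False
      then have "\<phi> a > 0" "\<psi> a > 0" using \<phi>[OF a] \<psi>[OF a] by auto
      then have "\<psi> a * ln (\<phi> a * m / M) \<le> \<psi> a * ln (\<psi> a) - \<psi> a + \<phi> a * m / M"
        using \<open>m > 0\<close> \<open>M > 0\<close> by (intro mult_ln_le) auto
      then show ?thesis
        using \<open>\<phi> a > 0\<close> \<open>m > 0\<close> \<open>M > 0\<close> by (simp add: ln_div ln_mult algebra_simps)
    qed
    have "unif_exp A (\<lambda>a. \<psi> a * (ln (\<phi> a) - ln M) + \<psi> a * ln m)
        \<le> unif_exp A (\<lambda>a. \<psi> a * ln (\<psi> a) - \<psi> a + \<phi> a * (m / M))"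
      using pointwise by (intro unif_exp_mono) simp
    also have "\<dots> = unif_exp A (\<lambda>a. \<psi> a * ln (\<psi> a)) - m + M * (m / M)"
      unfolding unif_exp_add unif_exp_diff unif_exp_multc m_def M_def ..
    also have "\<dots> = unif_exp A (\<lambda>a. \<psi> a * ln (\<psi> a))" using \<open>M > 0\<close> by simp
    finally show ?thesis
      unfolding unif_ent_def unif_exp_add unif_exp_multc m_def M_def by simp
  qed
qed

lemma unif_ent_convex:
  assumes fA: "finite A" and fB: "finite B"
    and \<psi>: "\<And>a b. a \<in> A \<Longrightarrow> b \<in> B \<Longrightarrow> \<psi> a b \<ge> 0"
  shows "unif_ent A (\<lambda>a. unif_exp B (\<psi> a)) \<le> unif_exp B (\<lambda>b. unif_ent A (\<lambda>a. \<psi> a b))"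
proof -
  define m where "m a = unif_exp B (\<psi> a)" for a
  define M where "M = unif_exp A m"
  have m_nonneg: "m a \<ge> 0" if "a \<in> A" for a
    unfolding m_def by (rule unif_exp_nonneg) (simp add: \<psi> that)
  have "M \<ge> 0" unfolding M_def by (rule unif_exp_nonneg) (rule m_nonneg)
  have m_zero: "\<psi> a b = 0" if "a \<in> A" "b \<in> B" "m a = 0" for a b
    using unif_exp_eq_0_imp_eq_0[OF fB, of "\<psi> a"] \<psi> that unfolding m_def by blast
  show ?thesis
  proof (cases "M = 0")
    case True
    then have "m a = 0" if "a \<in> A" for a
      using unif_exp_eq_0_imp_eq_0[OF fA, of m a] m_nonneg M_def that by auto
    then have "unif_ent A m = 0" by (rule unif_ent_eq_0)
    moreover have "unif_exp B (\<lambda>b. unif_ent A (\<lambda>a. \<psi> a b)) = unif_exp B (\<lambda>_. 0)"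
      using m_zero \<open>\<And>a. a \<in> A \<Longrightarrow> m a = 0\<close> by (intro unif_exp_cong unif_ent_eq_0) blast
    ultimately show ?thesis by (simp add: m_def[abs_def])
  next
    case False
    with \<open>M \<ge> 0\<close> have "M > 0" by simp
    \<comment> \<open>Test the variational inequality on each slice \<psi> _ b against the common weight m.\<close>
    have "unif_exp B (\<lambda>b. unif_exp A (\<lambda>a. \<psi> a b * (ln (m a) - ln M)))
        \<le> unif_exp B (\<lambda>b. unif_ent A (\<lambda>a. \<psi> a b))"
      unfolding M_def
      by (intro unif_exp_mono unif_ent_variational fA) (use \<psi> m_nonneg \<open>M > 0\<close> m_zero M_def in auto)
    also have "unif_exp B (\<lambda>b. unif_exp A (\<lambda>a. \<psi> a b * (ln (m a) - ln M)))
        = unif_ent A m"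
      unfolding unif_exp_swap[of B] unif_ent_def M_def m_def
      by (simp add: unif_exp_multc right_diff_distrib unif_exp_diff)
    finally show ?thesis by (simp add: m_def[abs_def])
  qed
qed

lemma unif_ent_config_space_Suc:
  assumes "finite S"
  shows "unif_ent (config_space S (Suc N)) \<psi>
       = unif_ent (config_space S N) (\<lambda>x. unif_exp S (\<lambda>u. \<psi> (x(N := u))))
       + unif_exp (config_space S N) (\<lambda>x. unif_ent S (\<lambda>u. \<psi> (x(N := u))))"
  unfolding unif_ent_def unif_exp_config_space_Suc[OF assms] unif_exp_diff by simp

theorem unif_ent_config_space_le:
  assumes fS: "finite S" and nS: "S \<noteq> {}"
    and "\<And>x. x \<in> config_space S N \<Longrightarrow> \<psi> x \<ge> 0"
  shows "unif_ent (config_space S N) \<psi>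
    \<le> (\<Sum>i<N. unif_exp (config_space S N) (\<lambda>x. unif_ent S (\<lambda>u. \<psi> (x(i := u)))))"
  using assms(3)
proof (induction N arbitrary: \<psi>)
  case 0
  have "config_space S 0 = {\<lambda>_. undefined}" unfolding config_space_def by simp
  then show ?case by (simp add: unif_ent_def unif_exp_def)
next
  case (Suc N)
  let ?X = "config_space S N" and ?Y = "config_space S (Suc N)"
  have nonneg: "\<psi> (x(N := u)) \<ge> 0" if "x \<in> ?X" "u \<in> S" for x u
    using Suc.prems fun_upd_in_config_space_Suc that by blast
  have "unif_ent ?X (\<lambda>x. unif_exp S (\<lambda>u. \<psi> (x(N := u))))
      \<le> unif_exp S (\<lambda>u. unif_ent ?X (\<lambda>x. \<psi> (x(N := u))))"
    by (rule unif_ent_convex[OF finite_config_space[OF fS] fS nonneg])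
  also have "\<dots> \<le> unif_exp S (\<lambda>u. \<Sum>i<N. unif_exp ?X (\<lambda>x. unif_ent S (\<lambda>v. \<psi> (x(i := v, N := u)))))"
    by (intro unif_exp_mono Suc.IH) (use nonneg in blast)
  also have "\<dots> = (\<Sum>i<N. unif_exp ?Y (\<lambda>x. unif_ent S (\<lambda>v. \<psi> (x(i := v)))))"
    unfolding unif_exp_sum[OF finite_lessThan] unif_exp_config_space_Suc[OF fS] unif_exp_swap[of S]
    by (intro sum.cong refl) (simp add: fun_upd_twist)
  finally have "unif_ent ?X (\<lambda>x. unif_exp S (\<lambda>u. \<psi> (x(N := u))))
      \<le> (\<Sum>i<N. unif_exp ?Y (\<lambda>x. unif_ent S (\<lambda>v. \<psi> (x(i := v)))))" .
  moreover have "unif_exp ?X (\<lambda>x. unif_ent S (\<lambda>u. \<psi> (x(N := u))))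
      = unif_exp ?Y (\<lambda>x. unif_ent S (\<lambda>u. \<psi> (x(N := u))))"
    unfolding unif_exp_config_space_Suc[OF fS] by (simp add: unif_exp_const[OF fS nS])
  ultimately show ?case
    unfolding unif_ent_config_space_Suc[OF fS] sum.lessThan_Suc by linarith
qed

lemma sq_mult_ln_sq_le:
  fixes t n :: real
  assumes t: "0 \<le> t" "t \<le> n" and n: "2 \<le> n"
  shows "t\<^sup>2 * ln (t\<^sup>2) - t\<^sup>2 + 1 \<le> 10 * ln n * (t - 1)\<^sup>2"
proof -
  have "ln n \<ge> 2/3" using ln2_ge_two_thirds n by (smt (verit) ln_le_cancel_iff)
  consider "t = 0" | "0 < t" "t \<le> 2" | "2 < t" using t by linarith
  then show ?thesis
  proof cases
    case 1
    then show ?thesis using \<open>ln n \<ge> 2/3\<close> by simp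
  next
    case 2
    have "ln t \<le> t - 1" using 2 by (intro ln_le_minus_one)
    then have "t\<^sup>2 * ln (t\<^sup>2) \<le> t\<^sup>2 * (2 * (t - 1))"
      using 2 by (simp add: ln_realpow mult_left_mono)
    moreover have "t\<^sup>2 * (2 * (t - 1)) - t\<^sup>2 + 1 = (t - 1)\<^sup>2 * (2 * t + 1)"
      by (simp add: power2_eq_square algebra_simps)
    moreover have "(t - 1)\<^sup>2 * (2 * t + 1) \<le> (t - 1)\<^sup>2 * (10 * ln n)"
      using 2 \<open>ln n \<ge> 2/3\<close> by (intro mult_left_mono) auto
    ultimately show ?thesis by (simp add: mult.commute)
  next
    case 3
    have "ln t \<le> ln n" using 3 t by simp
    then have "t\<^sup>2 * ln (t\<^sup>2) \<le> t\<^sup>2 * (2 * ln n)"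
      using 3 by (simp add: ln_realpow mult_left_mono)
    moreover have "t\<^sup>2 \<le> (2 * (t - 1))\<^sup>2" using 3 by (intro power_mono) auto
    then have "t\<^sup>2 * (2 * ln n) \<le> (2 * (t - 1))\<^sup>2 * (2 * ln n)"
      using \<open>ln n \<ge> 2/3\<close> by (intro mult_right_mono) auto
    moreover have "(2 * (t - 1))\<^sup>2 * (2 * ln n) = 8 * ln n * (t - 1)\<^sup>2"
      by (simp add: power2_eq_square algebra_simps)
    moreover have "8 * ln n * (t - 1)\<^sup>2 \<le> 10 * ln n * (t - 1)\<^sup>2"
      using \<open>ln n \<ge> 2/3\<close> by (intro mult_right_mono) auto
    moreover have "1 \<le> t\<^sup>2" using 3 by (simp add: one_le_power)
    ultimately show ?thesis by linarith
  qed
qed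

lemma sq_mult_ln_sq_le_scaled:
  fixes s a n :: real
  assumes a: "a > 0" and s: "0 \<le> s" "s \<le> n * a" and n: "2 \<le> n"
  shows "s\<^sup>2 * ln (s\<^sup>2) - s\<^sup>2 * ln (a\<^sup>2) - s\<^sup>2 + a\<^sup>2 \<le> 10 * ln n * (s - a)\<^sup>2"
proof -
  define t where "t = s / a"
  have s_eq: "s = t * a" using a unfolding t_def by simp
  have "0 \<le> t" "t \<le> n" using a s unfolding t_def by (simp_all add: divide_le_eq)
  have "s\<^sup>2 * ln (s\<^sup>2) - s\<^sup>2 * ln (a\<^sup>2) - s\<^sup>2 + a\<^sup>2 = a\<^sup>2 * (t\<^sup>2 * ln (t\<^sup>2) - t\<^sup>2 + 1)"
  proof (cases "t = 0")
    case False
    then have "ln (s\<^sup>2) = ln (t\<^sup>2) + ln (a\<^sup>2)" using s_eq a by (simp add: power_mult_distrib ln_mult)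
    then show ?thesis using s_eq by (simp add: power_mult_distrib algebra_simps)
  qed (simp add: s_eq)
  also have "\<dots> \<le> a\<^sup>2 * (10 * ln n * (t - 1)\<^sup>2)"
    using sq_mult_ln_sq_le[OF \<open>0 \<le> t\<close> \<open>t \<le> n\<close> n] by (intro mult_left_mono) auto
  also have "\<dots> = 10 * ln n * (s - a)\<^sup>2" using s_eq by (simp add: power2_eq_square algebra_simps)
  finally show ?thesis .
qed

lemma unif_ent_sq_le_unif_var:
  assumes fS: "finite S" and nS: "S \<noteq> {}" and f: "\<And>u. u \<in> S \<Longrightarrow> f u \<ge> 0"
  shows "unif_ent S (\<lambda>u. (f u)\<^sup>2) \<le> 10 * ln (real (card S)) * unif_var S f"
proof -
  define n where "n = card S"
  define a where "a = unif_exp S f"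
  define M where "M = unif_exp S (\<lambda>u. (f u)\<^sup>2)"
  have "n \<ge> 1" using fS nS unfolding n_def by (simp add: Suc_le_eq card_gt_0_iff)
  have "a \<ge> 0" unfolding a_def by (rule unif_exp_nonneg) (rule f)
  consider "n = 1" | "a = 0" | "n \<ge> 2" "a > 0" using \<open>n \<ge> 1\<close> \<open>a \<ge> 0\<close> by linarith
  then show ?thesis
  proof cases
    case 1
    then obtain c where "S = {c}" unfolding n_def using card_1_singletonE by blast
    then show ?thesis by (simp add: unif_ent_def unif_var_def unif_exp_def)
  next
    case 2
    then have "f u = 0" if "u \<in> S" for u
      using unif_exp_eq_0_imp_eq_0[OF fS, of f u] f that a_def by auto
    then have "unif_ent S (\<lambda>u. (f u)\<^sup>2) = 0" "unif_var S f = 0"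
      by (simp_all add: unif_ent_eq_0 unif_var_def unif_exp_def)
    then show ?thesis by simp
  next
    case 3
    have f_le: "f u \<le> real n * a" if "u \<in> S" for u
    proof -
      have "f u \<le> (\<Sum>v\<in>S. f v)" using fS that f by (intro member_le_sum) auto
      also have "\<dots> = real n * a" using \<open>n \<ge> 1\<close> unfolding a_def unif_exp_def n_def by simp
      finally show ?thesis .
    qed
    have "- M * ln M \<le> - M * ln (a\<^sup>2) - M + a\<^sup>2"
    proof (cases "M = 0")
      case False
      then have "M > 0" using unif_exp_nonneg[of S "\<lambda>u. (f u)\<^sup>2"] M_def by simp
      then show ?thesis using mult_ln_le[of M "a\<^sup>2"] \<open>a > 0\<close> by simp
    qed simp
    then have "unif_ent S (\<lambda>u. (f u)\<^sup>2)
        \<le> unif_exp S (\<lambda>u. (f u)\<^sup>2 * ln ((f u)\<^sup>2)) - M * ln (a\<^sup>2) - M + a\<^sup>2"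
      unfolding unif_ent_def M_def by simp
    also have "\<dots> = unif_exp S (\<lambda>u. (f u)\<^sup>2 * ln ((f u)\<^sup>2) - (f u)\<^sup>2 * ln (a\<^sup>2) - (f u)\<^sup>2 + a\<^sup>2)"
      unfolding unif_exp_add unif_exp_diff unif_exp_multc unif_exp_const[OF fS nS] M_def ..
    also have "\<dots> \<le> unif_exp S (\<lambda>u. 10 * ln (real n) * (f u - a)\<^sup>2)"
      using 3 by (intro unif_exp_mono sq_mult_ln_sq_le_scaled f f_le) auto
    also have "\<dots> = 10 * ln (real n) * unif_exp S (\<lambda>u. (f u)\<^sup>2 - 2 * a * f u + a\<^sup>2)"
      unfolding unif_exp_cmult by (simp add: power2_eq_square algebra_simps)
    also have "\<dots> = 10 * ln (real n) * unif_var S f"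
      unfolding unif_exp_add unif_exp_diff unif_exp_cmult unif_exp_const[OF fS nS] unif_var_def
        a_def[symmetric] by (simp add: power2_eq_square)
    finally show ?thesis unfolding n_def .
  qed
qed

lemma dirichlet_nonneg: "(\<And>a b. a \<in> S \<Longrightarrow> b \<in> S \<Longrightarrow> K a b \<ge> 0) \<Longrightarrow> dirichlet S K f \<ge> 0"
  unfolding dirichlet_def by (intro mult_nonneg_nonneg sum_nonneg) auto

lemma poincare_of_spectral_gap:
  assumes gap: "spectral_gap S K \<ge> ereal \<gamma>" and "\<gamma> \<ge> 0"
    and K: "\<And>a b. a \<in> S \<Longrightarrow> b \<in> S \<Longrightarrow> K a b \<ge> 0"
  shows "\<gamma> * unif_var S f \<le> dirichlet S K f"
proof (cases "unif_var S f > 0")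
  case False
  then have "\<gamma> * unif_var S f \<le> 0" using \<open>\<gamma> \<ge> 0\<close> by (simp add: mult_nonneg_nonpos)
  then show ?thesis using dirichlet_nonneg[of S K f, OF K] by linarith
next
  case True
  have "spectral_gap S K \<le> ereal (dirichlet S K f / unif_var S f)"
    unfolding spectral_gap_def
  proof (rule Sup_least)
    fix e assume "e \<in> {ereal g |g. 0 \<le> g \<and> (\<forall>f. g * unif_var S f \<le> dirichlet S K f)}"
    then obtain g where "e = ereal g" "g * unif_var S f \<le> dirichlet S K f" by blast
    then show "e \<le> ereal (dirichlet S K f / unif_var S f)" using True by (simp add: le_divide_eq)
  qed
  then have "\<gamma> \<le> dirichlet S K f / unif_var S f" using gap by (metis ereal_less_eq(3) order_trans)
  then show ?thesis using True by (simp add: le_divide_eq)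
qed

lemma dirichlet_coord_kernel_eq:
  assumes fS: "finite S"
  shows "dirichlet (config_space S N) (coord_kernel S N K) F
    = (\<Sum>i<N. \<Sum>x\<in>config_space S N. \<Sum>u\<in>S. K i x (x i) u * (F x - F (x(i := u)))\<^sup>2)
      / (2 * real N * real (card (config_space S N)))"
proof -
  let ?X = "config_space S N"
  have row: "(\<Sum>y\<in>?X. coord_kernel S N K x y * (F x - F y)\<^sup>2)
      = (\<Sum>i<N. \<Sum>u\<in>S. K i x (x i) u * (F x - F (x(i := u)))\<^sup>2) / real N" if x: "x \<in> ?X" for x
  proof -
    have "(\<Sum>y\<in>?X. coord_kernel S N K x y * (F x - F y)\<^sup>2)
        = (\<Sum>y\<in>?X. \<Sum>i<N. \<Sum>u\<in>S. if y = x(i := u) then K i x (x i) u * (F x - F y)\<^sup>2 else 0)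
          / real N"
      unfolding coord_kernel_def sum_divide_distrib
      by (intro sum.cong refl) (auto intro!: sum.cong simp: sum_distrib_right sum_divide_distrib)
    also have "\<dots> = (\<Sum>i<N. \<Sum>u\<in>S. \<Sum>y\<in>?X. if y = x(i := u) then K i x (x i) u * (F x - F y)\<^sup>2 else 0)
          / real N"
      by (subst sum.swap) (simp add: sum.swap[of _ ?X S])
    also have "\<dots> = (\<Sum>i<N. \<Sum>u\<in>S. K i x (x i) u * (F x - F (x(i := u)))\<^sup>2) / real N"
      using finite_config_space[OF fS] fun_upd_in_config_space[OF x]
      by (simp add: sum.delta'[of ?X])
    finally show ?thesis .
  qed
  have "dirichlet ?X (coord_kernel S N K) F
      = (\<Sum>x\<in>?X. \<Sum>y\<in>?X. coord_kernel S N K x y * (F x - F y)\<^sup>2) / (2 * real (card ?X))"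
    unfolding dirichlet_def by (simp add: sum_divide_distrib[symmetric] sum_distrib_left[symmetric] mult_ac)
  also have "\<dots> = (\<Sum>x\<in>?X. \<Sum>i<N. \<Sum>u\<in>S. K i x (x i) u * (F x - F (x(i := u)))\<^sup>2)
      / (2 * real N * real (card ?X))"
    by (simp add: row sum_divide_distrib[symmetric] mult_ac)
  finally show ?thesis by (subst (asm) sum.swap)
qed

lemma unif_exp_dirichlet_fibre:
  assumes fS: "finite S" and nS: "S \<noteq> {}" and i: "i < N"
    and K_fibre: "\<forall>x\<in>config_space S N. \<forall>w\<in>S. K i (x(i := w)) = K i x"
  shows "unif_exp (config_space S N) (\<lambda>x. dirichlet S (K i x) (\<lambda>u. F (x(i := u))))
    = (\<Sum>x\<in>config_space S N. \<Sum>u\<in>S. K i x (x i) u * (F x - F (x(i := u)))\<^sup>2)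
      / (2 * real (card (config_space S N)))"
proof -
  let ?X = "config_space S N"
  define Q where "Q x = (\<Sum>u\<in>S. K i x (x i) u * (F x - F (x(i := u)))\<^sup>2)" for x
  have fibre: "dirichlet S (K i x) (\<lambda>u. F (x(i := u))) = (\<Sum>a\<in>S. Q (x(i := a))) / (2 * real (card S))"
    if x: "x \<in> ?X" for x
  proof -
    have "Q (x(i := a)) = (\<Sum>b\<in>S. K i x a b * (F (x(i := a)) - F (x(i := b)))\<^sup>2)" if "a \<in> S" for a
      unfolding Q_def using K_fibre x that by simp
    then show ?thesis
      unfolding dirichlet_def by (simp add: sum_divide_distrib sum_distrib_left mult_ac)
  qed
  have "unif_exp ?X (\<lambda>x. dirichlet S (K i x) (\<lambda>u. F (x(i := u))))
      = (\<Sum>x\<in>?X. \<Sum>a\<in>S. Q (x(i := a))) / (2 * real (card S) * real (card ?X))"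
    unfolding unif_exp_def by (simp add: fibre sum_divide_distrib[symmetric])
  also have "\<dots> = (\<Sum>x\<in>?X. Q x) / (2 * real (card ?X))"
    using fS nS by (simp add: sum_config_space_fibre[OF i])
  finally show ?thesis unfolding Q_def .
qed

lemma dirichlet_coord_kernel:
  assumes "finite S" "S \<noteq> {}" "N \<ge> 1"
    and "\<forall>i<N. \<forall>x\<in>config_space S N. \<forall>w\<in>S. K i (x(i := w)) = K i x"
  shows "real N * dirichlet (config_space S N) (coord_kernel S N K) F
    = (\<Sum>i<N. unif_exp (config_space S N) (\<lambda>x. dirichlet S (K i x) (\<lambda>u. F (x(i := u)))))"
  using assms
  by (simp add: dirichlet_coord_kernel_eq unif_exp_dirichlet_fibre sum_divide_distrib[symmetric])

lemma log_sobolev_of_spectral_gap: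
  assumes fS: "finite S" and nS: "S \<noteq> {}"
    and K: "\<And>a b. a \<in> S \<Longrightarrow> b \<in> S \<Longrightarrow> K a b \<ge> 0"
    and gap: "spectral_gap S K \<ge> ereal \<gamma>" and "\<gamma> > 0"
    and f_nonneg: "\<And>u. u \<in> S \<Longrightarrow> f u \<ge> 0"
  shows "unif_ent S (\<lambda>u. (f u)\<^sup>2) \<le> 10 * ln (real (card S)) / \<gamma> * dirichlet S K f"
proof -
  have "ln (real (card S)) \<ge> 0" using fS nS by (simp add: Suc_le_eq card_gt_0_iff)
  moreover have "\<gamma> * unif_var S f \<le> dirichlet S K f"
    using gap \<open>\<gamma> > 0\<close> K by (intro poincare_of_spectral_gap) auto
  ultimately have "ln (real (card S)) * (\<gamma> * unif_var S f) \<le> ln (real (card S)) * dirichlet S K f"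
    by (intro mult_left_mono)
  then have "10 * ln (real (card S)) * unif_var S f \<le> 10 * ln (real (card S)) / \<gamma> * dirichlet S K f"
    using \<open>\<gamma> > 0\<close> by (simp add: field_simps)
  moreover have "unif_ent S (\<lambda>u. (f u)\<^sup>2) \<le> 10 * ln (real (card S)) * unif_var S f"
    using fS nS f_nonneg by (rule unif_ent_sq_le_unif_var)
  ultimately show ?thesis by linarith
qed

lemma ent_sq_le_dirichlet_coord_kernel:
  assumes fS: "finite S" and N: "N \<ge> 1"
    and K_fibre: "\<forall>i<N. \<forall>x\<in>config_space S N. \<forall>w\<in>S. K i (x(i := w)) = K i x"
    and K_nonneg: "\<forall>i<N. \<forall>x\<in>config_space S N. \<forall>a\<in>S. \<forall>b\<in>S. K i x a b \<ge> 0"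
    and "\<gamma> > 0"
    and gap: "\<forall>i<N. \<forall>x\<in>config_space S N. (\<exists>u\<in>S. x(i := u) \<in> G) \<longrightarrow>
          spectral_gap S (K i x) \<ge> ereal \<gamma>"
    and F_nonneg: "\<forall>x\<in>config_space S N. F x \<ge> 0"
    and F_supp: "\<forall>x\<in>config_space S N. F x \<noteq> 0 \<longrightarrow> x \<in> G"
  shows "ent_sq (config_space S N) F
    \<le> 10 * (real N * ln (real (card S)) / \<gamma>) * dirichlet (config_space S N) (coord_kernel S N K) F"
proof (cases "S = {}")
  case True
  with N have "config_space S N = {}" by (auto simp: config_space_def PiE_eq_empty_iff intro: exI[of _ 0])
  then show ?thesis by (simp add: ent_sq_def unif_exp_def dirichlet_def)
next
  case nS: False
  let ?X = "config_space S N"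
  define c where "c = 10 * ln (real (card S)) / \<gamma>"
  have fibre: "unif_ent S (\<lambda>u. (F (x(i := u)))\<^sup>2) \<le> c * dirichlet S (K i x) (\<lambda>u. F (x(i := u)))"
    if i: "i < N" and x: "x \<in> ?X" for i x
  proof (cases "\<exists>u\<in>S. x(i := u) \<in> G")
    case True
    then show ?thesis unfolding c_def
      using gap K_nonneg F_nonneg fun_upd_in_config_space[OF x i] i x \<open>\<gamma> > 0\<close>
      by (intro log_sobolev_of_spectral_gap fS nS) auto
  next
    case False
    then have "unif_ent S (\<lambda>u. (F (x(i := u)))\<^sup>2) = 0"
      using F_supp fun_upd_in_config_space[OF x i] by (intro unif_ent_eq_0) auto
    moreover have "c \<ge> 0" unfolding c_def using \<open>\<gamma> > 0\<close> fS nS by (simp add: Suc_le_eq card_gt_0_iff)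
    moreover have "dirichlet S (K i x) (\<lambda>u. F (x(i := u))) \<ge> 0"
      using K_nonneg i x by (intro dirichlet_nonneg) auto
    ultimately show ?thesis by simp
  qed
  have "ent_sq ?X F \<le> (\<Sum>i<N. unif_exp ?X (\<lambda>x. unif_ent S (\<lambda>u. (F (x(i := u)))\<^sup>2)))"
    unfolding ent_sq_eq_unif_ent by (rule unif_ent_config_space_le[OF fS nS]) simp
  also have "\<dots> \<le> (\<Sum>i<N. unif_exp ?X (\<lambda>x. c * dirichlet S (K i x) (\<lambda>u. F (x(i := u)))))"
    by (intro sum_mono unif_exp_mono fibre) auto
  also have "\<dots> = c * (real N * dirichlet ?X (coord_kernel S N K) F)"
    by (simp add: unif_exp_cmult sum_distrib_left dirichlet_coord_kernel[OF fS nS N K_fibre])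
  finally show ?thesis unfolding c_def by (simp add: mult_ac)
qed

theorem proposition2p2:
  shows "\<exists>C :: real. \<forall>(S :: nat set) (N :: nat)
      (K :: nat \<Rightarrow> (nat \<Rightarrow> nat) \<Rightarrow> nat \<Rightarrow> nat \<Rightarrow> real)
      (\<Omega> :: (nat \<Rightarrow> nat) set) (G :: (nat \<Rightarrow> nat) set) (\<gamma> :: real)
      (F :: (nat \<Rightarrow> nat) \<Rightarrow> real).
    finite S \<and> N \<ge> 1
    \<comment> \<open>K i x depends on x only through x_{-i}\<close>
    \<and> (\<forall>i<N. \<forall>x\<in>config_space S N. \<forall>w\<in>S. K i (x(i := w)) = K i x)
    \<comment> \<open>each K_i(x_{-i}) is a Markov kernel on S reversible w.r.t. uniform measure\<close>
    \<and> (\<forall>i<N. \<forall>x\<in>config_space S N. unif_reversible_markov S (K i x))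
    \<comment> \<open>P reversible w.r.t. mu (uniform on S^N)\<close>
    \<and> (\<forall>x\<in>config_space S N. \<forall>y\<in>config_space S N.
          (1 / real (card (config_space S N))) * coord_kernel S N K x y
        = (1 / real (card (config_space S N))) * coord_kernel S N K y x)
    \<comment> \<open>Omega invariant with positive mass\<close>
    \<and> \<Omega> \<subseteq> config_space S N
    \<and> (\<forall>x\<in>\<Omega>. \<forall>y\<in>config_space S N - \<Omega>. coord_kernel S N K x y = 0)
    \<and> unif_prob (config_space S N) \<Omega> > 0
    \<and> G \<subseteq> \<Omega>
    \<and> \<gamma> > 0
    \<and> (\<forall>i<N. \<forall>x\<in>config_space S N. (\<exists>u\<in>S. x(i := u) \<in> G) \<longrightarrow>
          spectral_gap S (K i x) \<ge> ereal \<gamma>)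
    \<and> (\<forall>x\<in>config_space S N. F x \<ge> 0)
    \<and> (\<forall>x\<in>config_space S N. F x \<noteq> 0 \<longrightarrow> x \<in> G)
    \<longrightarrow> ent_sq (config_space S N) F
        \<le> C * (real N * ln (real (card S)) / \<gamma>)
             * dirichlet (config_space S N) (coord_kernel S N K) F"
  by (intro exI[of _ "10::real"] allI impI, elim conjE, rule ent_sq_le_dirichlet_coord_kernel)
    (auto simp: unif_reversible_markov_def)

end
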